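(* Let $M$ be a finite-dimensional complex representation of a finite quiver $Q$ with ordered basis $\mathcal B$, $\underline e$ a dimension vector and $\beta\subseteq\mathcal B$ of type $\underline e$. If $\beta$ is not extremal successor closed, then the Schubert cell $C_\beta^M$ is empty.
   Context: $\mathcal B=\bigcup_p\mathcal B_p$ is a union of bases of the $M_p$, linearly ordered. $\beta$ is of type $\underline e$ if $|\beta\cap\mathcal B_p|=e_p$ for all $p$. $\mathrm{Gr}_{\underline e}(M)$ is the variety of subrepresentations of dimension vector $\underline e$. For $e$-subsets $I=\{i_1<\dots<i_e\}$, $J=\{j_1<\dots<j_e\}$, $I\le J$ means $i_l\le j_l$ for all $l$. $C_\beta^M$ is the set of $N\in\mathrm{Gr}_{\underline e}(M)$ such that for each $p$ the Plücker coordinates w.r.t. $\mathcal B_p$ satisfy $\Delta_{\beta_p}(N_p)\ne0$ and $\Delta_J(N_p)=0$ for all $J>\beta_p$, where $\beta_p=\beta\cap\mathcal B_p$. Coefficient quiver $T=\Gamma(M,\mathcal B)$: vertices $T_0=\mathcal B$; for $\bar\alpha\in Q_1$, $b\in\mathcal B_{s(\bar\alpha)}$, $c\in\mathcal B_{t(\bar\alpha)}$ there is an arrow $b\to c$ (of colour $\bar\alpha$) iff the coefficient of $c$ in $M_{\bar\alpha}(b)$ is nonzero; $F:T\to Q$ maps $b\in\mathcal B_p$ to $p$ and an arrow of colour $\bar\alpha$ to $\bar\alpha$. An arrow $\alpha:s\to t$ of $T$ is extremal if every other arrow $\alpha':s'\to t'$ of $T$ with $F(\alpha')=F(\alpha)$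 satisfies $s<s'$ or $t'<t$. A subset $\beta\subseteq T_0$ is extremal successor closed if for every extremal arrow $\alpha:s\to t$ of $T$, either $s\notin\beta$ or $t\in\beta$. *)

theory Defs
  imports Complex_Main "Jordan_Normal_Form.Determinant"
begin

text \<open>
A finite-dimensional complex representation M with ordered basis
is given by a finite set B of basis vectors (linearly ordered by the type class linorder),
a map vtx sending each basis vector b to the vertex p with b in B_p, and the structure
coefficients coef a b c = coefficient of c in M_a(b) (for b in B_(s a), c in B_(t a)).
The space M_p is the space of complex functions on B supported on B_p.
\<close>

definition Bp :: "'b set \<Rightarrow> ('b \<Rightarrow> 'v) \<Rightarrow> 'v \<Rightarrow> 'b set" where
  "Bp B vtx p = {b \<in> B. vtx b = p}"

definition rep_map :: "'b set \<Rightarrow> ('b \<Rightarrow> 'v) \<Rightarrow> ('a \<Rightarrow> 'v) \<Rightarrow> ('a \<Rightarrow> 'v)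
    \<Rightarrow> ('a \<Rightarrow> 'b \<Rightarrow> 'b \<Rightarrow> complex) \<Rightarrow> 'a \<Rightarrow> ('b \<Rightarrow> complex) \<Rightarrow> ('b \<Rightarrow> complex)" where
  "rep_map B vtx s t coef a f =
     (\<lambda>c. if c \<in> Bp B vtx (t a) then (\<Sum>b\<in>Bp B vtx (s a). coef a b c * f b) else 0)"

definition is_basis_of :: "'b set \<Rightarrow> ('b \<Rightarrow> 'v) \<Rightarrow> 'v \<Rightarrow> nat \<Rightarrow> ('b \<Rightarrow> complex) set
    \<Rightarrow> (nat \<Rightarrow> 'b \<Rightarrow> complex) \<Rightarrow> bool" where
  "is_basis_of B vtx p d U V \<longleftrightarrow>
     (\<forall>i<d. \<forall>b. b \<notin> Bp B vtx p \<longrightarrow> V i b = 0) \<and>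
     (\<forall>c :: nat \<Rightarrow> complex. (\<lambda>b. \<Sum>i<d. c i * V i b) = (\<lambda>b. 0) \<longrightarrow> (\<forall>i<d. c i = 0)) \<and>
     U = {(\<lambda>b. \<Sum>i<d. c i * V i b) | c :: nat \<Rightarrow> complex. True}"

definition quiver_grassmannian :: "'v set \<Rightarrow> 'a set \<Rightarrow> ('a \<Rightarrow> 'v) \<Rightarrow> ('a \<Rightarrow> 'v) \<Rightarrow> 'b set
    \<Rightarrow> ('b \<Rightarrow> 'v) \<Rightarrow> ('a \<Rightarrow> 'b \<Rightarrow> 'b \<Rightarrow> complex) \<Rightarrow> ('v \<Rightarrow> nat)
    \<Rightarrow> ('v \<Rightarrow> ('b \<Rightarrow> complex) set) set" where
  "quiver_grassmannian Q0 Q1 s t B vtx coef e =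
     {N. (\<forall>p\<in>Q0. \<exists>V. is_basis_of B vtx p (e p) (N p) V) \<and>
         (\<forall>a\<in>Q1. \<forall>f\<in>N (s a). rep_map B vtx s t coef a f \<in> N (t a))}"

text \<open>Pluecker coordinate Delta_J(N_p) w.r.t. the basis B_p (computed from a chosen basis
of N_p; its vanishing does not depend on that choice). Rows: basis of N_p, columns: J in increasing order.\<close>
definition plucker :: "'b::linorder set \<Rightarrow> ('b \<Rightarrow> 'v) \<Rightarrow> ('v \<Rightarrow> nat) \<Rightarrow> ('v \<Rightarrow> ('b \<Rightarrow> complex) set)
    \<Rightarrow> 'v \<Rightarrow> 'b set \<Rightarrow> complex" where
  "plucker B vtx e N p J =
     (let V = (SOME V. is_basis_of B vtx p (e p) (N p) V)
      in det (mat (e p) (e p) (\<lambda>(i, k). V i (sorted_list_of_set J ! k))))"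

definition subset_le :: "'b::linorder set \<Rightarrow> 'b set \<Rightarrow> bool" where
  "subset_le I J \<longleftrightarrow> card I = card J \<and>
     (\<forall>l<card I. sorted_list_of_set I ! l \<le> sorted_list_of_set J ! l)"

definition of_type :: "'v set \<Rightarrow> 'b set \<Rightarrow> ('b \<Rightarrow> 'v) \<Rightarrow> ('v \<Rightarrow> nat) \<Rightarrow> 'b set \<Rightarrow> bool" where
  "of_type Q0 B vtx e \<beta> \<longleftrightarrow> \<beta> \<subseteq> B \<and> (\<forall>p\<in>Q0. card (\<beta> \<inter> Bp B vtx p) = e p)"

definition schubert_cell :: "'v set \<Rightarrow> 'a set \<Rightarrow> ('a \<Rightarrow> 'v) \<Rightarrow> ('a \<Rightarrow> 'v) \<Rightarrow> 'b::linorder set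
    \<Rightarrow> ('b \<Rightarrow> 'v) \<Rightarrow> ('a \<Rightarrow> 'b \<Rightarrow> 'b \<Rightarrow> complex) \<Rightarrow> ('v \<Rightarrow> nat) \<Rightarrow> 'b set
    \<Rightarrow> ('v \<Rightarrow> ('b \<Rightarrow> complex) set) set" where
  "schubert_cell Q0 Q1 s t B vtx coef e \<beta> =
     {N \<in> quiver_grassmannian Q0 Q1 s t B vtx coef e.
        \<forall>p\<in>Q0. plucker B vtx e N p (\<beta> \<inter> Bp B vtx p) \<noteq> 0 \<and>
          (\<forall>J. J \<subseteq> Bp B vtx p \<and> card J = e p \<and>
               subset_le (\<beta> \<inter> Bp B vtx p) J \<and> J \<noteq> \<beta> \<inter> Bp B vtx p
               \<longrightarrow> plucker B vtx e N p J = 0)}"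

text \<open>arrows of the coefficient quiver T = Gamma(M,B): triples (b, a, c) = arrow b -> c of colour a\<close>
definition coeff_quiver_arrows :: "'a set \<Rightarrow> ('a \<Rightarrow> 'v) \<Rightarrow> ('a \<Rightarrow> 'v) \<Rightarrow> 'b set \<Rightarrow> ('b \<Rightarrow> 'v)
    \<Rightarrow> ('a \<Rightarrow> 'b \<Rightarrow> 'b \<Rightarrow> complex) \<Rightarrow> ('b \<times> 'a \<times> 'b) set" where
  "coeff_quiver_arrows Q1 s t B vtx coef =
     {(b, a, c). a \<in> Q1 \<and> b \<in> Bp B vtx (s a) \<and> c \<in> Bp B vtx (t a) \<and> coef a b c \<noteq> 0}"

definition extremal_arrow :: "'a set \<Rightarrow> ('a \<Rightarrow> 'v) \<Rightarrow> ('a \<Rightarrow> 'v) \<Rightarrow> 'b::linorder set \<Rightarrow> ('b \<Rightarrow> 'v)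
    \<Rightarrow> ('a \<Rightarrow> 'b \<Rightarrow> 'b \<Rightarrow> complex) \<Rightarrow> 'b \<times> 'a \<times> 'b \<Rightarrow> bool" where
  "extremal_arrow Q1 s t B vtx coef \<alpha> \<longleftrightarrow>
     \<alpha> \<in> coeff_quiver_arrows Q1 s t B vtx coef \<and>
     (\<forall>\<alpha>' \<in> coeff_quiver_arrows Q1 s t B vtx coef.
        \<alpha>' \<noteq> \<alpha> \<and> fst (snd \<alpha>') = fst (snd \<alpha>) \<longrightarrow>
          fst \<alpha> < fst \<alpha>' \<or> snd (snd \<alpha>') < snd (snd \<alpha>))"

definition ext_succ_closed :: "'a set \<Rightarrow> ('a \<Rightarrow> 'v) \<Rightarrow> ('a \<Rightarrow> 'v) \<Rightarrow> 'b::linorder set \<Rightarrow> ('b \<Rightarrow> 'v)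
    \<Rightarrow> ('a \<Rightarrow> 'b \<Rightarrow> 'b \<Rightarrow> complex) \<Rightarrow> 'b set \<Rightarrow> bool" where
  "ext_succ_closed Q1 s t B vtx coef \<beta> \<longleftrightarrow>
     (\<forall>\<alpha>. extremal_arrow Q1 s t B vtx coef \<alpha> \<longrightarrow> fst \<alpha> \<notin> \<beta> \<or> snd (snd \<alpha>) \<in> \<beta>)"

end

theory Submission imports Defs begin

text \<open>
Fix a point N of the cell and a vertex p. Since the Pluecker coordinate of beta_p is nonzero
while those of all larger subsets vanish, N_p has a basis in reduced echelon form with pivots
beta_p: for every pivot b there is a vector with leading coordinate at b, and a vector of N_p
vanishing above a non-pivot c also vanishes at c. Now take an extremal arrow b \<rightarrow> c of
colour a with b in beta and c not in beta, and apply M_a to a vector v with leading coordinate b.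
By extremality no other arrow of colour a ends at c or above c and starts at a basis vector
at most b, so the image lies in N_(t a), vanishes above c and has the nonzero coordinate
coef a b c * v b at c, a contradiction.
\<close>

lemma card_insert_Diff_singleton:
  assumes "finite A" "j \<in> A" "c \<notin> A"
  shows "card (insert c (A - {j})) = card A"
proof -
  have "card A > 0" using assms card_gt_0_iff by blast
  then show ?thesis using assms by simp
qed

lemma card_less_sorted_nth:
  fixes S :: "'b::linorder set"
  assumes "finite S" "l < card S"
  shows "card {z\<in>S. z < sorted_list_of_set S ! l} = l"
proof -
  define xs where "xs = sorted_list_of_set S"
  have sorted: "sorted_wrt (<) xs" and dist: "distinct xs"
    and len: "length xs = card S" and set: "set xs = S"
    using assms unfolding xs_def by auto
  have "{z\<in>S. z < xs ! l} = (!) xs ` {..<l}"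
  proof (intro equalityI subsetI)
    fix z assume "z \<in> {z\<in>S. z < xs ! l}"
    then obtain i where i: "i < length xs" "z = xs ! i" "xs ! i < xs ! l"
      using set by (auto simp: in_set_conv_nth)
    have "i < l"
      using sorted i assms(2) len by (metis linorder_neqE_nat not_less_iff_gr_or_eq sorted_wrt_nth_less)
    with i show "z \<in> (!) xs ` {..<l}" by auto
  next
    fix z assume "z \<in> (!) xs ` {..<l}"
    then show "z \<in> {z\<in>S. z < xs ! l}"
      using sorted assms len set by (auto simp: sorted_wrt_iff_nth_less)
  qed
  moreover have "inj_on ((!) xs) {..<l}"
    using dist assms len by (auto simp: inj_on_def nth_eq_iff_index_eq)
  ultimately show ?thesis unfolding xs_def[symmetric] by (simp add: card_image)
qed

lemma card_le_sorted_nth: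
  fixes S :: "'b::linorder set"
  assumes "finite S" "l < card S"
  shows "card {z\<in>S. z \<le> sorted_list_of_set S ! l} = Suc l"
proof -
  have "sorted_list_of_set S ! l \<in> S"
    using assms by (metis length_sorted_list_of_set nth_mem set_sorted_list_of_set)
  then have "{z\<in>S. z \<le> sorted_list_of_set S ! l} =
      insert (sorted_list_of_set S ! l) {z\<in>S. z < sorted_list_of_set S ! l}"
    by auto
  then show ?thesis using card_less_sorted_nth[OF assms] assms(1) by simp
qed

text \<open>The l-th element of a set is characterised by the number of elements below it, so it
suffices to compare these counts for I and its exchange.\<close>
lemma subset_le_exchange:
  fixes I :: "'b::linorder set"
  assumes fin: "finite I" and j: "j \<in> I" and c: "c \<notin> I" and jc: "j < c"
  shows "subset_le I (insert c (I - {j}))"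
proof -
  define K where "K = insert c (I - {j})"
  have finK: "finite K" and cardK: "card K = card I"
    unfolding K_def using fin card_insert_Diff_singleton[OF fin j c] by auto
  have "sorted_list_of_set I ! l \<le> sorted_list_of_set K ! l" if l: "l < card I" for l
  proof (rule ccontr)
    let ?x = "sorted_list_of_set I ! l" and ?y = "sorted_list_of_set K ! l"
    assume "\<not> ?x \<le> ?y"
    have "card {z\<in>K. z \<le> ?y} \<le> card {z\<in>I. z \<le> ?y}"
    proof (cases "c \<le> ?y")
      case True
      then have "{z\<in>K. z \<le> ?y} = insert c ({z\<in>I. z \<le> ?y} - {j})"
        using jc unfolding K_def by auto
      then show ?thesis
        using fin j jc c True card_insert_Diff_singleton[of "{z\<in>I. z \<le> ?y}" j c] by simp
    next
      case False
      then have "{z\<in>K. z \<le> ?y} \<subseteq> {z\<in>I. z \<le> ?y}" unfolding K_def by auto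
      then show ?thesis using fin by (intro card_mono) auto
    qed
    also have "\<dots> \<le> card {z\<in>I. z < ?x}"
      using fin \<open>\<not> ?x \<le> ?y\<close> by (intro card_mono) auto
    finally show False
      using card_le_sorted_nth[OF finK] card_less_sorted_nth[OF fin l] l cardK by simp
  qed
  then show ?thesis unfolding subset_le_def K_def[symmetric] using cardK by simp
qed

lemma basis_span_diff:
  assumes "is_basis_of B vtx p d U V" "u \<in> U" "w \<in> U"
  shows "(\<lambda>b. u b - x * w b) \<in> U"
proof -
  have U: "U = {(\<lambda>b. \<Sum>i<d. c i * V i b) | c. True}"
    using assms(1) unfolding is_basis_of_def by auto
  obtain cu cw where "u = (\<lambda>b. \<Sum>i<d. cu i * V i b)" "w = (\<lambda>b. \<Sum>i<d. cw i * V i b)"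
    using assms(2,3) U by blast
  then have "(\<lambda>b. u b - x * w b) = (\<lambda>b. \<Sum>i<d. (cu i - x * cw i) * V i b)"
    by (auto simp: sum_subtractf sum_distrib_left algebra_simps)
  then show ?thesis unfolding U by (intro CollectI exI[of _ "\<lambda>i. cu i - x * cw i"]) simp
qed

lemma basis_span_nonzero_iff:
  assumes "is_basis_of B vtx p d U V"
  shows "(\<exists>u\<in>U. u \<noteq> (\<lambda>b. 0) \<and> P u) \<longleftrightarrow>
    (\<exists>v\<in>carrier_vec d. v \<noteq> 0\<^sub>v d \<and> P (\<lambda>b. \<Sum>i<d. v $ i * V i b))"
proof -
  have indep: "\<And>c. (\<lambda>b. \<Sum>i<d. c i * V i b) = (\<lambda>b. 0) \<Longrightarrow> \<forall>i<d. c i = 0"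
    and U: "U = {(\<lambda>b. \<Sum>i<d. c i * V i b) | c. True}"
    using assms unfolding is_basis_of_def by auto
  have nonzero: "(\<lambda>b. \<Sum>i<d. v $ i * V i b) \<noteq> (\<lambda>b. 0) \<longleftrightarrow> v \<noteq> 0\<^sub>v d"
    if "v \<in> carrier_vec d" for v
    using that indep[of "\<lambda>i. v $ i"] by auto
  show ?thesis
  proof
    assume "\<exists>u\<in>U. u \<noteq> (\<lambda>b. 0) \<and> P u"
    then obtain u where u: "u \<in> U" "u \<noteq> (\<lambda>b. 0)" "P u" by blast
    then obtain c where c: "u = (\<lambda>b. \<Sum>i<d. c i * V i b)" unfolding U by blast
    have coords: "u = (\<lambda>b. \<Sum>i<d. vec d c $ i * V i b)"
      unfolding c by (intro ext sum.cong) auto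
    have "vec d c \<noteq> 0\<^sub>v d"
    proof
      assume "vec d c = 0\<^sub>v d"
      with coords have "u = (\<lambda>b. 0)" by simp
      with u(2) show False ..
    qed
    then show "\<exists>v\<in>carrier_vec d. v \<noteq> 0\<^sub>v d \<and> P (\<lambda>b. \<Sum>i<d. v $ i * V i b)"
      using u(3) coords vec_carrier by metis
  next
    assume "\<exists>v\<in>carrier_vec d. v \<noteq> 0\<^sub>v d \<and> P (\<lambda>b. \<Sum>i<d. v $ i * V i b)"
    then obtain v where v: "v \<in> carrier_vec d" "v \<noteq> 0\<^sub>v d" "P (\<lambda>b. \<Sum>i<d. v $ i * V i b)"
      by blast
    have "(\<lambda>b. \<Sum>i<d. v $ i * V i b) \<in> U" unfolding U by blast
    then show "\<exists>u\<in>U. u \<noteq> (\<lambda>b. 0) \<and> P u" using v nonzero by blast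
  qed
qed

text \<open>Zero columns pad the minor to a square matrix, so that lists shorter than d are covered
as well; this gives the dimension count in basis_span_exists_vanishing.\<close>
lemma det_padded_minor_eq_0_iff:
  assumes bas: "is_basis_of B vtx p d U V" and len: "length L \<le> d"
  shows "det (mat d d (\<lambda>(i, k). if k < length L then V i (L ! k) else 0)) = 0 \<longleftrightarrow>
         (\<exists>u\<in>U. u \<noteq> (\<lambda>b. 0) \<and> (\<forall>k<length L. u (L ! k) = 0))"
proof -
  define A where "A = mat d d (\<lambda>(i, k). if k < length L then V i (L ! k) else 0)"
  have A: "A \<in> carrier_mat d d" and AT: "A\<^sup>T \<in> carrier_mat d d" unfolding A_def by auto
  have "A\<^sup>T *\<^sub>v v = 0\<^sub>v d \<longleftrightarrow> (\<forall>k<length L. (\<Sum>i<d. v $ i * V i (L ! k)) = 0)"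
    if "v \<in> carrier_vec d" for v
  proof -
    have entry: "(A\<^sup>T *\<^sub>v v) $ k = (if k < length L then \<Sum>i<d. v $ i * V i (L ! k) else 0)"
      if "k < d" for k
      using \<open>v \<in> carrier_vec d\<close> that unfolding A_def
      by (auto simp: scalar_prod_def lessThan_atLeast0 intro!: sum.cong)
    show ?thesis
    proof
      assume "A\<^sup>T *\<^sub>v v = 0\<^sub>v d"
      then show "\<forall>k<length L. (\<Sum>i<d. v $ i * V i (L ! k)) = 0"
        using entry len by (metis index_zero_vec(1) less_le_trans)
    qed (rule eq_vecI, use entry AT in auto)
  qed
  then have "det A\<^sup>T = 0 \<longleftrightarrow>
      (\<exists>v\<in>carrier_vec d. v \<noteq> 0\<^sub>v d \<and> (\<forall>k<length L. (\<Sum>i<d. v $ i * V i (L ! k)) = 0))"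
    using det_0_iff_vec_prod_zero_field[OF AT] by blast
  then show ?thesis
    unfolding basis_span_nonzero_iff[OF bas] det_transpose[OF A] by (simp only: A_def)
qed

lemma plucker_eq_0_iff:
  assumes ex: "\<exists>V. is_basis_of B vtx p (e p) (N p) V" and fin: "finite J" and card: "card J = e p"
  shows "plucker B vtx e N p J = 0 \<longleftrightarrow> (\<exists>u\<in>N p. u \<noteq> (\<lambda>b. 0) \<and> (\<forall>x\<in>J. u x = 0))"
proof -
  define V where "V = (SOME V. is_basis_of B vtx p (e p) (N p) V)"
  have bas: "is_basis_of B vtx p (e p) (N p) V" unfolding V_def using ex by (rule someI_ex)
  define L where "L = sorted_list_of_set J"
  have len: "length L = e p" and setL: "set L = J" unfolding L_def using fin card by auto
  have "mat (e p) (e p) (\<lambda>(i, k). V i (L ! k)) =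
      mat (e p) (e p) (\<lambda>(i, k). if k < length L then V i (L ! k) else 0)"
    by (rule eq_matI) (auto simp: len)
  then have "plucker B vtx e N p J =
      det (mat (e p) (e p) (\<lambda>(i, k). if k < length L then V i (L ! k) else 0))"
    unfolding plucker_def Let_def V_def[symmetric] L_def[symmetric] by simp
  then have "plucker B vtx e N p J = 0 \<longleftrightarrow>
      (\<exists>u\<in>N p. u \<noteq> (\<lambda>b. 0) \<and> (\<forall>k<length L. u (L ! k) = 0))"
    using det_padded_minor_eq_0_iff[OF bas, of L] len by simp
  also have "\<dots> \<longleftrightarrow> (\<exists>u\<in>N p. u \<noteq> (\<lambda>b. 0) \<and> (\<forall>x\<in>J. u x = 0))"
    unfolding setL[symmetric] by (metis in_set_conv_nth)
  finally show ?thesis .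
qed

lemma basis_span_exists_vanishing:
  fixes S :: "'b::linorder set"
  assumes bas: "is_basis_of B vtx p d U V" and fin: "finite S" and card: "card S < d"
  shows "\<exists>u\<in>U. u \<noteq> (\<lambda>b. 0) \<and> (\<forall>x\<in>S. u x = 0)"
proof -
  define L where "L = sorted_list_of_set S"
  have len: "length L = card S" and setL: "set L = S" unfolding L_def using fin by auto
  define A where "A = mat d d (\<lambda>(i, k). if k < length L then V i (L ! k) else 0)"
  have "A *\<^sub>v unit_vec d (length L) = 0\<^sub>v d"
    using len card
    by (intro eq_vecI) (auto simp: A_def scalar_prod_def unit_vec_def intro!: sum.neutral)
  moreover have "(unit_vec d (length L) :: complex vec) \<noteq> 0\<^sub>v d"
    using len card by (metis index_unit_vec(1) index_zero_vec(1) zero_neq_one)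
  moreover have "A \<in> carrier_mat d d" unfolding A_def by simp
  ultimately have "det A = 0"
    using det_0_iff_vec_prod_zero_field unit_vec_carrier by blast
  then show ?thesis
    using det_padded_minor_eq_0_iff[OF bas, of L] len card setL unfolding A_def
    by (simp add: in_set_conv_nth) (metis in_set_conv_nth)
qed

text \<open>The Schubert cell conditions at one vertex p, with U = N_p, P = B_p and I = beta_p,
phrased via vanishing coordinates instead of Pluecker coordinates.\<close>
locale pivot_subspace =
  fixes U :: "('b::linorder \<Rightarrow> complex) set" and P I :: "'b set"
  assumes diff_closed: "\<And>u w x. u \<in> U \<Longrightarrow> w \<in> U \<Longrightarrow> (\<lambda>b. u b - x * w b) \<in> U"
    and finite_pivots: "finite I" and pivots_subset: "I \<subseteq> P"
    and exists_vanishing_small: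
      "\<And>S. finite S \<Longrightarrow> card S < card I \<Longrightarrow> \<exists>u\<in>U. u \<noteq> (\<lambda>b. 0) \<and> (\<forall>x\<in>S. u x = 0)"
    and vanishing_on_pivots: "\<And>u. u \<in> U \<Longrightarrow> \<forall>x\<in>I. u x = 0 \<Longrightarrow> u = (\<lambda>b. 0)"
    and exists_vanishing_above:
      "\<And>J. J \<subseteq> P \<Longrightarrow> card J = card I \<Longrightarrow> subset_le I J \<Longrightarrow> J \<noteq> I \<Longrightarrow>
        \<exists>u\<in>U. u \<noteq> (\<lambda>b. 0) \<and> (\<forall>x\<in>J. u x = 0)"
begin

lemma nonzero_at_pivot:
  assumes "u \<in> U" "u \<noteq> (\<lambda>b. 0)" "\<forall>x\<in>I - {j}. u x = 0"
  shows "u j \<noteq> 0"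
  using assms vanishing_on_pivots by (metis Diff_iff singletonD)

lemma exchange_vector:
  assumes j: "j \<in> I" and c: "c \<in> P" "c \<notin> I" and jc: "j < c"
  obtains u where "u \<in> U" "\<forall>x\<in>I - {j}. u x = 0" "u c = 0" "u j \<noteq> 0"
proof -
  let ?J = "insert c (I - {j})"
  have "\<exists>u\<in>U. u \<noteq> (\<lambda>b. 0) \<and> (\<forall>x\<in>?J. u x = 0)"
    using pivots_subset c j card_insert_Diff_singleton[OF finite_pivots j c(2)]
      subset_le_exchange[OF finite_pivots j c(2) jc]
    by (intro exists_vanishing_above) auto
  then show ?thesis using nonzero_at_pivot that by auto
qed

text \<open>The vectors of U vanishing on I - {j} form a line, spanned by an exchange vector.\<close>
lemma vanishing_off_pivot_imp_vanishing_above: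
  assumes j: "j \<in> I" and c: "c \<in> P" "c \<notin> I" and jc: "j < c"
    and u: "u \<in> U" "\<forall>x\<in>I - {j}. u x = 0"
  shows "u c = 0"
proof -
  obtain u' where u': "u' \<in> U" "\<forall>x\<in>I - {j}. u' x = 0" "u' c = 0" "u' j \<noteq> 0"
    using exchange_vector[OF j c jc] .
  define w where "w = (\<lambda>b. u b - (u j / u' j) * u' b)"
  have "w x = 0" if "x \<in> I" for x
    using that u(2) u'(2,4) unfolding w_def by (cases "x = j") auto
  then have "w = (\<lambda>b. 0)"
    using vanishing_on_pivots diff_closed[OF u(1) u'(1)] unfolding w_def by blast
  then show ?thesis using u'(3) unfolding w_def by (metis mult_zero_right diff_zero)
qed

lemma leading_vector:
  assumes b: "b \<in> I"
  obtains v where "v \<in> U" "v b \<noteq> 0" "\<forall>x\<in>P. b < x \<longrightarrow> v x = 0"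
proof -
  obtain u where u: "u \<in> U" "u \<noteq> (\<lambda>b. 0)" "\<forall>x\<in>I - {b}. u x = 0"
    using exists_vanishing_small[of "I - {b}"] card_Diff1_less[OF finite_pivots b] finite_pivots
    by auto
  have "u x = 0" if "x \<in> P" "b < x" for x
    using u(3) that vanishing_off_pivot_imp_vanishing_above[OF b that(1) _ that(2) u(1,3)]
    by (cases "x \<in> I") auto
  with u nonzero_at_pivot that show ?thesis by blast
qed

text \<open>Each pivot j in the support of w lies below c; subtracting a multiple of the exchange
vector for j and c clears the coordinate j without changing the coordinates at and above c.\<close>
lemma vanishing_above_nonpivot:
  assumes c: "c \<in> P" "c \<notin> I" and w: "w \<in> U" "\<forall>x\<in>P. c < x \<longrightarrow> w x = 0"
  shows "w c = 0"
  using w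
proof (induction "card {k\<in>I. w k \<noteq> 0}" arbitrary: w rule: less_induct)
  case less
  show ?case
  proof (cases "\<forall>j\<in>I. w j = 0")
    case True
    then show ?thesis using vanishing_on_pivots[OF less.prems(1)] by simp
  next
    case False
    then obtain j where j: "j \<in> I" "w j \<noteq> 0" by auto
    have jc: "j < c" using less.prems(2) j c pivots_subset by (metis in_mono linorder_neqE)
    obtain u where u: "u \<in> U" "\<forall>x\<in>I - {j}. u x = 0" "u c = 0" "u j \<noteq> 0"
      using exchange_vector[OF j(1) c jc] .
    have u_above: "u x = 0" if "x \<in> P" "c < x" for x
      using u(2) that jc vanishing_off_pivot_imp_vanishing_above[OF j(1) that(1) _ _ u(1,2)]
      by (cases "x \<in> I") auto
    define w' where "w' = (\<lambda>b. w b - (w j / u j) * u b)"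
    have "w' \<in> U" unfolding w'_def using diff_closed[OF less.prems(1) u(1)] .
    moreover have "\<forall>x\<in>P. c < x \<longrightarrow> w' x = 0"
      using less.prems(2) u_above unfolding w'_def by simp
    moreover have "w' k = (if k = j then 0 else w k)" if "k \<in> I" for k
      using that u(2,4) unfolding w'_def by auto
    then have "{k\<in>I. w' k \<noteq> 0} = {k\<in>I. w k \<noteq> 0} - {j}" by (auto split: if_splits)
    then have "card {k\<in>I. w' k \<noteq> 0} < card {k\<in>I. w k \<noteq> 0}"
      using card_Diff1_less[of "{k\<in>I. w k \<noteq> 0}" j] j finite_pivots by simp
    ultimately have "w' c = 0" using less.hyps by blast
    then show ?thesis unfolding w'_def using u(3) by simp
  qed
qed

end

lemma schubert_cell_pivot_subspace:
  assumes N: "N \<in> schubert_cell Q0 Q1 s t B vtx coef e \<beta>" and p: "p \<in> Q0"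
    and type: "of_type Q0 B vtx e \<beta>" and finB: "finite B"
  shows "pivot_subspace (N p) (Bp B vtx p) (\<beta> \<inter> Bp B vtx p)"
proof -
  let ?I = "\<beta> \<inter> Bp B vtx p"
  have ex: "\<exists>V. is_basis_of B vtx p (e p) (N p) V"
    using N p unfolding schubert_cell_def quiver_grassmannian_def by simp
  then obtain V where bas: "is_basis_of B vtx p (e p) (N p) V" ..
  have finP: "finite (Bp B vtx p)" using finB unfolding Bp_def by simp
  then have finI: "finite ?I" by simp
  have card: "card ?I = e p" using type p unfolding of_type_def by simp
  have cell: "plucker B vtx e N p ?I \<noteq> 0"
    "\<And>J. J \<subseteq> Bp B vtx p \<Longrightarrow> card J = e p \<Longrightarrow> subset_le ?I J \<Longrightarrow> J \<noteq> ?I \<Longrightarrow>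
      plucker B vtx e N p J = 0"
    using N p unfolding schubert_cell_def by auto
  show ?thesis
  proof
    show "\<And>u. u \<in> N p \<Longrightarrow> \<forall>x\<in>?I. u x = 0 \<Longrightarrow> u = (\<lambda>b. 0)"
      using cell(1) plucker_eq_0_iff[where e = e and N = N, OF ex finI card] by blast
    show "\<exists>u\<in>N p. u \<noteq> (\<lambda>b. 0) \<and> (\<forall>x\<in>J. u x = 0)"
      if "J \<subseteq> Bp B vtx p" "card J = card ?I" "subset_le ?I J" "J \<noteq> ?I" for J
      using that cell(2)[of J] card
        plucker_eq_0_iff[where e = e and N = N, OF ex finite_subset[OF that(1) finP]]
      by simp
  qed (use finI basis_span_diff[OF bas] basis_span_exists_vanishing[OF bas] card in auto)
qed

lemma rep_map_extremal_arrow: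
  assumes finB: "finite B" and ext: "extremal_arrow Q1 s t B vtx coef (b, a, c)"
    and v: "\<forall>x\<in>Bp B vtx (s a). b < x \<longrightarrow> v x = 0"
  shows "rep_map B vtx s t coef a v c = coef a b c * v b"
    and "\<forall>x\<in>Bp B vtx (t a). c < x \<longrightarrow> rep_map B vtx s t coef a v x = 0"
proof -
  have arrow: "a \<in> Q1" "b \<in> Bp B vtx (s a)" "c \<in> Bp B vtx (t a)"
    using ext unfolding extremal_arrow_def coeff_quiver_arrows_def by auto
  have other_terms: "coef a b' x * v b' = 0"
    if "b' \<in> Bp B vtx (s a)" "x \<in> Bp B vtx (t a)" "(b', x) \<noteq> (b, c)" "c \<le> x" for b' x
  proof (cases "coef a b' x = 0")
    case False
    then have "(b', a, x) \<in> coeff_quiver_arrows Q1 s t B vtx coef"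
      using arrow that unfolding coeff_quiver_arrows_def by auto
    then have "b < b'" using ext that unfolding extremal_arrow_def by fastforce
    then show ?thesis using v that(1) by simp
  qed simp
  have finS: "finite (Bp B vtx (s a))" using finB unfolding Bp_def by simp
  have "rep_map B vtx s t coef a v c =
      coef a b c * v b + (\<Sum>b'\<in>Bp B vtx (s a) - {b}. coef a b' c * v b')"
    unfolding rep_map_def using arrow sum.remove[OF finS arrow(2)] by simp
  also have "(\<Sum>b'\<in>Bp B vtx (s a) - {b}. coef a b' c * v b') = 0"
    using other_terms arrow(3) by (intro sum.neutral) auto
  finally show "rep_map B vtx s t coef a v c = coef a b c * v b" by simp
  show "\<forall>x\<in>Bp B vtx (t a). c < x \<longrightarrow> rep_map B vtx s t coef a v x = 0"
  proof (intro ballI impI)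
    fix x assume x: "x \<in> Bp B vtx (t a)" "c < x"
    then have "coef a b' x * v b' = 0" if "b' \<in> Bp B vtx (s a)" for b'
      using other_terms[OF that x(1)] x(2) by fastforce
    then show "rep_map B vtx s t coef a v x = 0"
      unfolding rep_map_def using x(1) by (simp add: sum.neutral)
  qed
qed

theorem lemma3p1:
  fixes Q0 :: "'v set" and Q1 :: "'a set" and s t :: "'a \<Rightarrow> 'v"
    and B :: "'b::linorder set" and vtx :: "'b \<Rightarrow> 'v"
    and coef :: "'a \<Rightarrow> 'b \<Rightarrow> 'b \<Rightarrow> complex"
    and e :: "'v \<Rightarrow> nat" and \<beta> :: "'b set"
  assumes "finite Q0" and "finite Q1"
    and "\<forall>a\<in>Q1. s a \<in> Q0 \<and> t a \<in> Q0"
    and "finite B" and "\<forall>b\<in>B. vtx b \<in> Q0"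
    and "of_type Q0 B vtx e \<beta>"
    and "\<not> ext_succ_closed Q1 s t B vtx coef \<beta>"
  shows "schubert_cell Q0 Q1 s t B vtx coef e \<beta> = {}"
proof (rule ccontr)
  assume "schubert_cell Q0 Q1 s t B vtx coef e \<beta> \<noteq> {}"
  then obtain N where N: "N \<in> schubert_cell Q0 Q1 s t B vtx coef e \<beta>" by blast
  obtain b a c where ext: "extremal_arrow Q1 s t B vtx coef (b, a, c)" and "b \<in> \<beta>" "c \<notin> \<beta>"
    using assms(7) unfolding ext_succ_closed_def by auto
  then have a: "a \<in> Q1" and b: "b \<in> \<beta> \<inter> Bp B vtx (s a)" and c: "c \<in> Bp B vtx (t a)"
    and "coef a b c \<noteq> 0"
    unfolding extremal_arrow_def coeff_quiver_arrows_def by auto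
  interpret src: pivot_subspace "N (s a)" "Bp B vtx (s a)" "\<beta> \<inter> Bp B vtx (s a)"
    using schubert_cell_pivot_subspace[OF N _ assms(6,4)] assms(3) a by blast
  interpret tgt: pivot_subspace "N (t a)" "Bp B vtx (t a)" "\<beta> \<inter> Bp B vtx (t a)"
    using schubert_cell_pivot_subspace[OF N _ assms(6,4)] assms(3) a by blast
  obtain v where v: "v \<in> N (s a)" "v b \<noteq> 0" "\<forall>x\<in>Bp B vtx (s a). b < x \<longrightarrow> v x = 0"
    using src.leading_vector[OF b] .
  let ?w = "rep_map B vtx s t coef a v"
  have "?w \<in> N (t a)"
    using N a v(1) unfolding schubert_cell_def quiver_grassmannian_def by blast
  then have "?w c = 0"
    using tgt.vanishing_above_nonpivot c \<open>c \<notin> \<beta>\<close> rep_map_extremal_arrow(2)[OF assms(4) ext v(3)]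
    by blast
  then show False
    using rep_map_extremal_arrow(1)[OF assms(4) ext v(3)] \<open>coef a b c \<noteq> 0\<close> v(2) by simp
qed

end
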